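(* Let $u\in\mathcal{R}_{16}$ be such that $|u|=1$. Then $u=\zeta_{16}^\ell$ for some $0\le\ell\le 15$.
   Context: $\zeta_{16}=e^{2\pi i/16}$ and $\mathcal{R}_{16}$ is the smallest subring of $\mathbb{C}$ containing $1/2$ and $\zeta_{16}$. *)

theory Defs
  imports "HOL-Analysis.Analysis"
begin

definition zeta16 :: complex where
  "zeta16 = cis (2 * pi / 16)"

definition is_subring_C :: "complex set \<Rightarrow> bool" where
  "is_subring_C S \<longleftrightarrow> 1 \<in> S \<and> (\<forall>x\<in>S. \<forall>y\<in>S. x + y \<in> S \<and> x - y \<in> S \<and> x * y \<in> S)"

definition R16 :: "complex set" where
  "R16 = \<Inter> {S. is_subring_C S \<and> 1/2 \<in> S \<and> zeta16 \<in> S}"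

end

theory Submission
  imports Defs "HOL-Computational_Algebra.Polynomial"
begin

(* R16 = Z16[1/2] with Z16 = Z[zeta16], so u = w / 2^k with w in Z16. In Z16 the element
   pi16 = 1 - zeta16 is prime with residue field F_2, 2 is pi16^8 times a unit, and cnj pi16 is
   an associate of pi16. If |u| = 1 then w * cnj w = 4^k is pi16^(16k) times a unit, which
   forces pi16^(8k) to divide w, so that u already lies in Z16. Writing u = sum_{j<8} a_j zeta16^j
   with integers a_j, the rational component of |u|^2 with respect to the basis
   1, cos(pi/8), sqrt 2 / 2, sin(pi/8) of Q(cos(pi/8)) is sum_j a_j^2; hence exactly one a_j is
   nonzero, it is +-1, and u = +-zeta16^j. *)

definition c8 :: real where "c8 = cos (pi / 8)"
definition s8 :: real where "s8 = sin (pi / 8)"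
definition r2 :: real where "r2 = sqrt 2 / 2"

lemma r2_sq: "r2\<^sup>2 = 1 / 2"
  by (simp add: r2_def power_divide)

lemma r2_r2_mult: "r2 * (r2 * x) = x / 2"
  using r2_sq by (simp add: power2_eq_square flip: mult.assoc)

lemma c8_sq: "c8\<^sup>2 = (1 + r2) / 2"
  using cos_double_cos[of "pi / 8"] cos_45 by (simp add: c8_def r2_def field_simps)

lemma s8_sq: "s8\<^sup>2 = (1 - r2) / 2"
  using cos_double_sin[of "pi / 8"] cos_45 by (simp add: s8_def r2_def field_simps)

lemma c8_s8: "c8 * s8 = r2 / 2"
  using sin_double[of "pi / 8"] sin_45 by (simp add: c8_def s8_def r2_def)

lemma cos_3pi8: "cos (3 * pi / 8) = s8"
  using sin_cos_eq[of "pi / 8"] by (simp add: s8_def)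

lemma sin_3pi8: "sin (3 * pi / 8) = c8"
  using cos_sin_eq[of "pi / 8"] by (simp add: c8_def)

lemma c8_r2: "c8 * r2 = (c8 + s8) / 2"
  using cos_times_cos[of "pi / 8" "pi / 4"] cos_45 cos_3pi8
  by (simp add: c8_def r2_def)

lemma s8_r2: "s8 * r2 = (c8 - s8) / 2"
  using sin_times_cos[of "pi / 8" "pi / 4"] cos_45 sin_3pi8
  by (simp add: c8_def s8_def r2_def)

lemma zeta16_power: "zeta16 ^ n = cis (real n * pi / 8)"
  unfolding zeta16_def Complex.DeMoivre by (simp add: field_simps)

lemma zeta16_powers:
  "zeta16 = Complex c8 s8" "zeta16 ^ 2 = Complex r2 r2" "zeta16 ^ 3 = Complex s8 c8"
  "zeta16 ^ 4 = \<i>" "zeta16 ^ 5 = Complex (- s8) c8" "zeta16 ^ 6 = Complex (- r2) r2"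
  "zeta16 ^ 7 = Complex (- c8) s8"
proof -
  show z1: "zeta16 = Complex c8 s8" and z2: "zeta16 ^ 2 = Complex r2 r2"
    and z3: "zeta16 ^ 3 = Complex s8 c8" and z4: "zeta16 ^ 4 = \<i>"
    using zeta16_power[of 1] zeta16_power[of 2] zeta16_power[of 3] zeta16_power[of 4]
      cos_3pi8 sin_3pi8 cos_45 sin_45
    by (simp_all add: cis.ctr c8_def s8_def r2_def complex_eq_iff)
  have "zeta16 ^ (4 + n) = \<i> * zeta16 ^ n" for n
    by (simp only: power_add z4)
  from this[of 1] this[of 2] this[of 3] z1 z2 z3
  show "zeta16 ^ 5 = Complex (- s8) c8" "zeta16 ^ 6 = Complex (- r2) r2"
    "zeta16 ^ 7 = Complex (- c8) s8"
    by (simp_all add: complex_eq_iff)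
qed

lemma zeta16_power_8: "zeta16 ^ 8 = -1"
  using zeta16_power[of 8] by simp

lemma rat_square_neq_2: "(q :: real) \<in> \<rat> \<Longrightarrow> q\<^sup>2 \<noteq> 2"
proof
  assume "q \<in> \<rat>" "q\<^sup>2 = 2"
  from \<open>q \<in> \<rat>\<close> obtain m n :: nat where "n \<noteq> 0" "\<bar>q\<bar> = m / n" "coprime m n"
    by (rule Rats_abs_nat_div_natE)
  then have "(real m / real n)\<^sup>2 = 2"
    using \<open>q\<^sup>2 = 2\<close> by (metis power2_abs)
  then have "real (m\<^sup>2) = real (2 * n\<^sup>2)"
    using \<open>n \<noteq> 0\<close> by (simp add: power_divide divide_eq_eq)
  then have m: "m\<^sup>2 = 2 * n\<^sup>2"
    by (simp only: of_nat_eq_iff)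
  then have "even (m\<^sup>2)" by simp
  then have "even m" by simp
  then obtain k where "m = 2 * k" by auto
  with m have "n\<^sup>2 = 2 * k\<^sup>2" by simp
  then have "even (n\<^sup>2)" by simp
  then have "even n" by simp
  with \<open>even m\<close> \<open>coprime m n\<close> show False
    using coprime_common_divisor[of m n 2] by simp
qed

lemma r2_irrational: "r2 \<notin> \<rat>"
proof
  assume "r2 \<in> \<rat>"
  moreover have "(2 * r2)\<^sup>2 = 2" using r2_sq by (simp add: power_mult_distrib)
  ultimately show False using rat_square_neq_2[of "2 * r2"] by simp
qed

lemma Q_sqrt2_independent:
  assumes "p \<in> \<rat>" "q \<in> \<rat>" "p + q * r2 = 0"
  shows "p = 0 \<and> q = 0"
proof (cases "q = 0")
  case False
  then have "r2 = - p / q" using assms(3) by (simp add: field_simps)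
  then show ?thesis using assms(1,2) r2_irrational by (metis Rats_divide Rats_minus_iff)
qed (use assms in simp)

definition Q_sqrt2 :: "real set" where
  "Q_sqrt2 = {p + q * r2 | p q. p \<in> \<rat> \<and> q \<in> \<rat>}"

lemma Q_sqrt2I: "p \<in> \<rat> \<Longrightarrow> q \<in> \<rat> \<Longrightarrow> p + q * r2 \<in> Q_sqrt2"
  unfolding Q_sqrt2_def by blast

lemma Q_sqrt2_divide:
  assumes "x \<in> Q_sqrt2" "y \<in> Q_sqrt2"
  shows "x / y \<in> Q_sqrt2"
proof -
  obtain p q r s where pqrs: "p \<in> \<rat>" "q \<in> \<rat>" "r \<in> \<rat>" "s \<in> \<rat>"
    and x: "x = p + q * r2" and y: "y = r + s * r2"
    using assms unfolding Q_sqrt2_def by blast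
  define N where "N = r\<^sup>2 - s\<^sup>2 / 2"
  have N: "N = y * (r - s * r2)"
    unfolding N_def y by (simp add: algebra_simps power2_eq_square r2_r2_mult)
  have xy: "x / y = ((p * r - q * s / 2) / N) + ((q * r - p * s) / N) * r2"
  proof (cases "y = 0")
    case False
    have "r - s * r2 \<noteq> 0"
      using Q_sqrt2_independent[of r "- s"] pqrs False y by auto
    then have "x / y = x * (r - s * r2) / N"
      using False by (simp add: N)
    also have "\<dots> = ((p * r - q * s / 2) / N) + ((q * r - p * s) / N) * r2"
      unfolding x by (simp add: algebra_simps r2_r2_mult add_divide_distrib diff_divide_distrib)
    finally show ?thesis .
  qed (simp add: N)
  have "N \<in> \<rat>"
    using pqrs by (simp add: N_def)
  then show ?thesis
    unfolding xy using pqrs by (intro Q_sqrt2I) simp_all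
qed

lemma c8_notin_Q_sqrt2: "c8 \<notin> Q_sqrt2"
proof
  assume "c8 \<in> Q_sqrt2"
  then obtain p q where pq: "p \<in> \<rat>" "q \<in> \<rat>" and c8: "c8 = p + q * r2"
    unfolding Q_sqrt2_def by blast
  have "(p\<^sup>2 + q\<^sup>2 / 2 - 1 / 2) + (2 * p * q - 1 / 2) * r2 = 0"
    using c8_sq unfolding c8 by (simp add: algebra_simps power2_eq_square r2_r2_mult)
  then have "p\<^sup>2 + q\<^sup>2 / 2 - 1 / 2 = 0 \<and> 2 * p * q - 1 / 2 = 0"
    by (intro Q_sqrt2_independent) (use pq in simp_all)
  then have "q\<^sup>2 = 1 - 2 * p\<^sup>2" and pq4: "p * q = 1 / 4"
    by simp_all
  then have "p\<^sup>2 * (1 - 2 * p\<^sup>2) = (p * q)\<^sup>2"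
    by (simp add: power_mult_distrib)
  also have "\<dots> = 1 / 16"
    unfolding pq4 by (simp add: power_divide)
  finally have "p\<^sup>2 * (1 - 2 * p\<^sup>2) = 1 / 16" .
  moreover have "(8 * p\<^sup>2 - 2)\<^sup>2 = 2 - 32 * (p\<^sup>2 * (1 - 2 * p\<^sup>2) - 1 / 16)"
    by (simp add: power2_eq_square algebra_simps)
  ultimately have "(8 * p\<^sup>2 - 2)\<^sup>2 = 2"
    by simp
  then show False using rat_square_neq_2 pq by simp
qed

lemma rat_combination_c8_r2_s8_eq_0:
  assumes "x \<in> \<rat>" "y \<in> \<rat>" "z \<in> \<rat>" "w \<in> \<rat>"
    and "x + y * c8 + z * r2 + w * s8 = 0"
  shows "x = 0 \<and> y = 0 \<and> z = 0 \<and> w = 0"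
proof -
  have s8: "s8 = 2 * c8 * r2 - c8"
    using c8_r2 by simp
  have eq: "(x + z * r2) + ((y - w) + 2 * w * r2) * c8 = 0"
    using assms(5) unfolding s8 by (simp add: algebra_simps)
  have "(y - w) + (2 * w) * r2 = 0"
  proof (rule ccontr)
    assume "(y - w) + (2 * w) * r2 \<noteq> 0"
    with eq have "c8 = ((- x) + (- z) * r2) / ((y - w) + (2 * w) * r2)"
      by (simp add: eq_divide_eq algebra_simps)
    moreover have "\<dots> \<in> Q_sqrt2"
      using assms(1-4) by (intro Q_sqrt2_divide Q_sqrt2I) simp_all
    ultimately show False
      using c8_notin_Q_sqrt2 by simp
  qed
  then have "y - w = 0 \<and> 2 * w = 0"
    using assms(2,4) by (intro Q_sqrt2_independent) simp_all
  moreover from this have "x + z * r2 = 0"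
    using eq by simp
  then have "x = 0 \<and> z = 0"
    using assms(1,3) by (intro Q_sqrt2_independent)
  ultimately show ?thesis by simp
qed

lemma square_combination_c8_r2_s8:
  "(x0 + xA * c8 + xB * r2 + xC * s8)\<^sup>2 =
     (x0\<^sup>2 + (xA\<^sup>2 + xB\<^sup>2 + xC\<^sup>2) / 2) + (2 * x0 * xA + xA * xB + xB * xC) * c8
     + (xA\<^sup>2 / 2 - xC\<^sup>2 / 2 + 2 * x0 * xB + xA * xC) * r2 + (2 * x0 * xC + xA * xB - xB * xC) * s8"
proof -
  have "(x0 + xA * c8 + xB * r2 + xC * s8)\<^sup>2 -
     ((x0\<^sup>2 + (xA\<^sup>2 + xB\<^sup>2 + xC\<^sup>2) / 2) + (2 * x0 * xA + xA * xB + xB * xC) * c8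
     + (xA\<^sup>2 / 2 - xC\<^sup>2 / 2 + 2 * x0 * xB + xA * xC) * r2 + (2 * x0 * xC + xA * xB - xB * xC) * s8) =
     xA\<^sup>2 * (c8\<^sup>2 - (1 + r2) / 2) + xB\<^sup>2 * (r2\<^sup>2 - 1 / 2) + xC\<^sup>2 * (s8\<^sup>2 - (1 - r2) / 2)
     + 2 * xA * xB * (c8 * r2 - (c8 + s8) / 2) + 2 * xA * xC * (c8 * s8 - r2 / 2)
     + 2 * xB * xC * (s8 * r2 - (c8 - s8) / 2)"
    by (simp add: power2_eq_square field_simps)
  also have "\<dots> = 0"
    by (simp add: c8_sq r2_sq s8_sq c8_r2 c8_s8 s8_r2)
  finally show ?thesis by simp
qed

lemma sum_squares_rat_combination_eq_1:
  assumes "x0 \<in> \<rat>" "xA \<in> \<rat>" "xB \<in> \<rat>" "xC \<in> \<rat>"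
    and "y0 \<in> \<rat>" "yA \<in> \<rat>" "yB \<in> \<rat>" "yC \<in> \<rat>"
    and "(x0 + xA * c8 + xB * r2 + xC * s8)\<^sup>2 + (y0 + yA * c8 + yB * r2 + yC * s8)\<^sup>2 = 1"
  shows "x0\<^sup>2 + (xA\<^sup>2 + xB\<^sup>2 + xC\<^sup>2) / 2 + y0\<^sup>2 + (yA\<^sup>2 + yB\<^sup>2 + yC\<^sup>2) / 2 = 1"
proof -
  let ?c = "x0\<^sup>2 + (xA\<^sup>2 + xB\<^sup>2 + xC\<^sup>2) / 2 + y0\<^sup>2 + (yA\<^sup>2 + yB\<^sup>2 + yC\<^sup>2) / 2 - 1"
  let ?p = "(2 * x0 * xA + xA * xB + xB * xC) + (2 * y0 * yA + yA * yB + yB * yC)"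
  let ?q = "(xA\<^sup>2 / 2 - xC\<^sup>2 / 2 + 2 * x0 * xB + xA * xC) + (yA\<^sup>2 / 2 - yC\<^sup>2 / 2 + 2 * y0 * yB + yA * yC)"
  let ?s = "(2 * x0 * xC + xA * xB - xB * xC) + (2 * y0 * yC + yA * yB - yB * yC)"
  have "?c + ?p * c8 + ?q * r2 + ?s * s8 = 0"
    using assms(9) unfolding square_combination_c8_r2_s8 by (simp add: algebra_simps)
  moreover have "?c \<in> \<rat>" "?p \<in> \<rat>" "?q \<in> \<rat>" "?s \<in> \<rat>"
    using assms(1-8) by simp_all
  ultimately have "?c = 0"
    using rat_combination_c8_r2_s8_eq_0 by blast
  then show ?thesis by simp
qed

inductive_set Z16 :: "complex set" where
  one: "1 \<in> Z16"
| zeta: "zeta16 \<in> Z16"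
| diff: "x \<in> Z16 \<Longrightarrow> y \<in> Z16 \<Longrightarrow> x - y \<in> Z16"
| mult: "x \<in> Z16 \<Longrightarrow> y \<in> Z16 \<Longrightarrow> x * y \<in> Z16"

lemma Z16_0: "0 \<in> Z16"
  using Z16.diff[OF Z16.one Z16.one] by simp

lemma Z16_uminus: "x \<in> Z16 \<Longrightarrow> - x \<in> Z16"
  using Z16.diff[OF Z16_0] by simp

lemma Z16_add: "x \<in> Z16 \<Longrightarrow> y \<in> Z16 \<Longrightarrow> x + y \<in> Z16"
  using Z16.diff[OF _ Z16_uminus] by fastforce

lemma Z16_power: "x \<in> Z16 \<Longrightarrow> x ^ n \<in> Z16"
  by (induction n) (simp_all add: Z16.one Z16.mult)

lemma Z16_of_nat: "of_nat n \<in> Z16"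
  by (induction n) (simp_all add: Z16_0 Z16_add Z16.one)

lemma Z16_of_int: "of_int n \<in> Z16"
proof -
  have "of_int n = of_nat (nat n) - (of_nat (nat (- n)) :: complex)"
    by (cases "n \<ge> 0") simp_all
  then show ?thesis using Z16.diff Z16_of_nat by metis
qed

lemma Z16_numeral: "numeral n \<in> Z16"
  using Z16_of_nat[of "numeral n"] by simp

lemmas Z16_intros = Z16.one Z16.zeta Z16.diff Z16.mult Z16_0 Z16_uminus Z16_add Z16_power
  Z16_of_int Z16_numeral

definition lincomb16 :: "(nat \<Rightarrow> int) \<Rightarrow> complex" where
  "lincomb16 a = (\<Sum>j<8. of_int (a j) * zeta16 ^ j)"

lemma lincomb16_expand:
  "lincomb16 a = of_int (a 0) + of_int (a 1) * zeta16 + of_int (a 2) * zeta16 ^ 2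
     + of_int (a 3) * zeta16 ^ 3 + of_int (a 4) * zeta16 ^ 4 + of_int (a 5) * zeta16 ^ 5
     + of_int (a 6) * zeta16 ^ 6 + of_int (a 7) * zeta16 ^ 7"
proof -
  have "{..<8::nat} = {0, 1, 2, 3, 4, 5, 6, 7}" by auto
  then show ?thesis by (simp add: lincomb16_def algebra_simps)
qed

lemma lincomb16_shift:
  "of_int c + zeta16 * lincomb16 a = lincomb16 (\<lambda>j. if j = 0 then c - a 7 else a (j - 1))"
proof -
  have "zeta16 * zeta16 ^ 7 = -1"
    using zeta16_power_8 by (simp flip: power_Suc)
  then show ?thesis
    by (simp add: lincomb16_expand distrib_left mult.left_commute[of zeta16]
        power2_eq_square[symmetric] flip: power_Suc)
qed

lemma Z16_int_poly: "x \<in> Z16 \<Longrightarrow> \<exists>p. (\<forall>i. coeff p i \<in> \<int>) \<and> x = poly p zeta16"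
proof (induction rule: Z16.induct)
  case one
  show ?case by (intro exI[of _ 1]) (simp add: coeff_1)
next
  case zeta
  show ?case by (intro exI[of _ "[:0, 1:]"]) (simp add: coeff_pCons split: nat.split)
next
  case (diff x y)
  then obtain p q where "\<forall>i. coeff p i \<in> \<int>" "x = poly p zeta16"
    and "\<forall>i. coeff q i \<in> \<int>" "y = poly q zeta16"
    by blast
  then show ?case by (intro exI[of _ "p - q"]) simp
next
  case (mult x y)
  then obtain p q where "\<forall>i. coeff p i \<in> \<int>" "x = poly p zeta16"
    and "\<forall>i. coeff q i \<in> \<int>" "y = poly q zeta16"
    by blast
  then show ?case by (intro exI[of _ "p * q"]) (simp add: coeff_mult Ints_sum Ints_mult)
qed

lemma int_poly_lincomb16: "\<forall>i. coeff p i \<in> \<int> \<Longrightarrow> \<exists>a. poly p zeta16 = lincomb16 a"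
proof (induction p)
  case 0
  show ?case by (intro exI[of _ "\<lambda>_. 0"]) (simp add: lincomb16_def)
next
  case (pCons c p)
  have "c \<in> \<int>" "\<forall>i. coeff p i \<in> \<int>"
    using pCons.prems[rule_format, of 0] pCons.prems[rule_format, of "Suc _"] by auto
  then obtain n a where "c = of_int n" "poly p zeta16 = lincomb16 a"
    using pCons.IH Ints_cases by metis
  then show ?case by (auto simp: lincomb16_shift)
qed

lemma Z16_lincomb16: "x \<in> Z16 \<Longrightarrow> \<exists>a. x = lincomb16 a"
  using Z16_int_poly int_poly_lincomb16 by metis

lemma Re_lincomb16:
  "Re (lincomb16 a) = a 0 + (a 1 - a 7) * c8 + (a 2 - a 6) * r2 + (a 3 - a 5) * s8"
  unfolding lincomb16_expand zeta16_powers(2-7) by (simp add: zeta16_powers(1) algebra_simps)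

lemma Im_lincomb16:
  "Im (lincomb16 a) = a 4 + (a 3 + a 5) * c8 + (a 2 + a 6) * r2 + (a 1 + a 7) * s8"
  unfolding lincomb16_expand zeta16_powers(2-7) by (simp add: zeta16_powers(1) algebra_simps)

lemma half_notin_Z16: "1 / 2 \<notin> Z16"
proof
  assume "1 / 2 \<in> Z16"
  then obtain a where a: "1 / 2 = lincomb16 a"
    using Z16_lincomb16 by blast
  have "(a 0 - 1 / 2) + (a 1 - a 7) * c8 + (a 2 - a 6) * r2 + (a 3 - a 5) * s8 = 0"
    using arg_cong[OF a, of Re] unfolding Re_lincomb16 by simp
  then have "real_of_int (a 0) - 1 / 2 = 0"
    using rat_combination_c8_r2_s8_eq_0
    by (meson Rats_diff Rats_of_int Rats_divide Rats_1 Rats_number_of)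
  then have "2 * a 0 = 1" by linarith
  then show False by presburger
qed

lemma lincomb16_norm_1:
  assumes "norm (lincomb16 a) = 1"
  shows "(\<Sum>j<8. (a j)\<^sup>2) = 1"
proof -
  have "(Re (lincomb16 a))\<^sup>2 + (Im (lincomb16 a))\<^sup>2 = 1"
    using assms cmod_power2[of "lincomb16 a"] by simp
  then have "(real_of_int (a 0))\<^sup>2 + ((real_of_int (a 1 - a 7))\<^sup>2 + (real_of_int (a 2 - a 6))\<^sup>2
      + (real_of_int (a 3 - a 5))\<^sup>2) / 2 + (real_of_int (a 4))\<^sup>2 + ((real_of_int (a 3 + a 5))\<^sup>2
      + (real_of_int (a 2 + a 6))\<^sup>2 + (real_of_int (a 1 + a 7))\<^sup>2) / 2 = 1"
    unfolding Re_lincomb16 Im_lincomb16 by (intro sum_squares_rat_combination_eq_1) simp_all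
  then have "real_of_int (\<Sum>j<8. (a j)\<^sup>2) = 1"
    by (simp add: numeral_eq_Suc power2_eq_square algebra_simps add_divide_distrib diff_divide_distrib)
  then show ?thesis by linarith
qed

lemma int_sum_squares_eq_1:
  fixes f :: "'a \<Rightarrow> int"
  assumes "finite A" and "(\<Sum>i\<in>A. (f i)\<^sup>2) = 1"
  obtains j where "j \<in> A" "f j = 1 \<or> f j = -1" "\<And>i. i \<in> A \<Longrightarrow> i \<noteq> j \<Longrightarrow> f i = 0"
proof -
  obtain j where j: "j \<in> A" "f j \<noteq> 0"
    using assms(2) by (metis (mono_tags, lifting) power_zero_numeral sum.neutral zero_neq_one)
  have "(\<Sum>i\<in>A. (f i)\<^sup>2) = (f j)\<^sup>2 + (\<Sum>i\<in>A - {j}. (f i)\<^sup>2)"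
    using assms(1) j(1) by (simp add: sum.remove)
  moreover have "(f j)\<^sup>2 \<ge> 1"
    using j(2) by (simp add: int_one_le_iff_zero_less)
  moreover have "(\<Sum>i\<in>A - {j}. (f i)\<^sup>2) \<ge> 0"
    by (simp add: sum_nonneg)
  ultimately have "(f j)\<^sup>2 = 1" "(\<Sum>i\<in>A - {j}. (f i)\<^sup>2) = 0"
    using assms(2) by linarith+
  then have "f j = 1 \<or> f j = -1" "\<And>i. i \<in> A \<Longrightarrow> i \<noteq> j \<Longrightarrow> f i = 0"
    using assms(1) by (simp_all add: power2_eq_1_iff sum_nonneg_eq_0_iff)
  with j(1) show ?thesis by (rule that)
qed

lemma Z16_norm_1:
  assumes "x \<in> Z16" "norm x = 1"
  shows "\<exists>l::nat. l \<le> 15 \<and> x = zeta16 ^ l"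
proof -
  obtain a where a: "x = lincomb16 a"
    using Z16_lincomb16 assms(1) by blast
  then obtain j where j: "j < 8" "a j = 1 \<or> a j = -1"
    and "\<And>i. i < 8 \<Longrightarrow> i \<noteq> j \<Longrightarrow> a i = 0"
    using lincomb16_norm_1 assms(2) int_sum_squares_eq_1[of "{..<8}" a] by auto
  then have "x = of_int (a j) * zeta16 ^ j"
    unfolding a lincomb16_def by (simp add: sum.remove[of _ j] sum.neutral)
  with j show ?thesis
  proof (elim disjE)
    assume "a j = -1" "x = of_int (a j) * zeta16 ^ j"
    then have "x = zeta16 ^ (j + 8)"
      by (simp add: power_add zeta16_power_8)
    with \<open>j < 8\<close> show ?thesis by (intro exI[of _ "j + 8"]) simp
  qed (auto intro: exI[of _ j])
qed

definition pi16 :: complex where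
  "pi16 = 1 - zeta16"

definition dvd16 :: "complex \<Rightarrow> complex \<Rightarrow> bool" where
  "dvd16 x y \<longleftrightarrow> (\<exists>c\<in>Z16. y = x * c)"

lemma pi16_Z16: "pi16 \<in> Z16"
  unfolding pi16_def by (intro Z16_intros)

lemma cnj_zeta16: "cnj zeta16 = - (zeta16 ^ 7)"
  unfolding zeta16_powers(7) by (simp add: zeta16_powers(1) complex_eq_iff)

lemma Z16_cnj: "x \<in> Z16 \<Longrightarrow> cnj x \<in> Z16"
proof (induction rule: Z16.induct)
  case zeta
  show ?case unfolding cnj_zeta16 by (intro Z16_intros)
qed (simp_all add: Z16.one Z16.diff Z16.mult)

lemma cnj_pi16: "cnj pi16 = pi16 * zeta16 ^ 7"
  using zeta16_power_8 by (simp add: pi16_def cnj_zeta16 algebra_simps flip: power_Suc)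

(* (1 - x)^8 reduced modulo x^8 + 1 is twice this polynomial in x. *)
definition eps16 :: complex where
  "eps16 = - 4 * zeta16 + 14 * zeta16 ^ 2 - 28 * zeta16 ^ 3 + 35 * zeta16 ^ 4
     - 28 * zeta16 ^ 5 + 14 * zeta16 ^ 6 - 4 * zeta16 ^ 7"

lemma eps16_Z16: "eps16 \<in> Z16"
  unfolding eps16_def by (intro Z16_intros)

lemma pi16_power_8: "pi16 ^ 8 = 2 * eps16"
proof -
  have "pi16 ^ 8 = 2 * eps16 + (zeta16 ^ 8 + 1)"
    unfolding pi16_def eps16_def by (simp add: algebra_simps eval_nat_numeral)
  then show ?thesis using zeta16_power_8 by simp
qed

lemma eps16_unit: "\<exists>F\<in>Z16. eps16 * F = 1"
proof
  let ?F = "- 356 * zeta16 - 658 * zeta16 ^ 2 - 860 * zeta16 ^ 3 - 931 * zeta16 ^ 4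
     - 860 * zeta16 ^ 5 - 658 * zeta16 ^ 6 - 356 * zeta16 ^ 7"
  show "?F \<in> Z16" by (intro Z16_intros)
  have "eps16 * ?F = 1 + (zeta16 ^ 8 + 1) * (- 1 + 1424 * zeta16 ^ 2 - 2352 * zeta16 ^ 3
      + 4196 * zeta16 ^ 4 - 2352 * zeta16 ^ 5 + 1424 * zeta16 ^ 6)"
    unfolding eps16_def by (simp add: algebra_simps eval_nat_numeral)
  then show "eps16 * ?F = 1" using zeta16_power_8 by simp
qed

lemma two_eq_pi16_power_8: "\<exists>F\<in>Z16. 2 = pi16 ^ 8 * F"
  using eps16_unit pi16_power_8 by (metis mult.assoc mult.right_neutral)

lemma Z16_mod_pi16: "x \<in> Z16 \<Longrightarrow> \<exists>n::int. \<exists>c\<in>Z16. x = of_int n + pi16 * c"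
proof (induction rule: Z16.induct)
  case one
  show ?case using Z16_0 by (intro exI[of _ 1] bexI[of _ 0]) simp_all
next
  case zeta
  show ?case using Z16_intros by (intro exI[of _ 1] bexI[of _ "-1"]) (simp_all add: pi16_def)
next
  case (diff x y)
  then obtain n m c d where "c \<in> Z16" "d \<in> Z16" "x = of_int n + pi16 * c" "y = of_int m + pi16 * d"
    by blast
  then show ?case
    by (intro exI[of _ "n - m"] bexI[of _ "c - d"]) (simp_all add: algebra_simps Z16_intros)
next
  case (mult x y)
  then obtain n m c d where "c \<in> Z16" "d \<in> Z16" "x = of_int n + pi16 * c" "y = of_int m + pi16 * d"
    by blast
  then show ?case
    by (intro exI[of _ "n * m"] bexI[of _ "of_int n * d + of_int m * c + pi16 * c * d"])
      (simp_all add: algebra_simps Z16_intros pi16_Z16)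
qed

lemma pi16_dvd16_even: "dvd16 pi16 (of_int (2 * m))"
proof -
  obtain F where "F \<in> Z16" "2 = pi16 ^ 8 * F"
    using two_eq_pi16_power_8 by blast
  then have "of_int (2 * m) = pi16 * (pi16 ^ 7 * F * of_int m)"
    by (simp add: algebra_simps eval_nat_numeral)
  moreover have "pi16 ^ 7 * F * of_int m \<in> Z16"
    using \<open>F \<in> Z16\<close> pi16_Z16 by (intro Z16_intros)
  ultimately show ?thesis unfolding dvd16_def by blast
qed

lemma Z16_residue_0_or_1:
  assumes "x \<in> Z16"
  shows "dvd16 pi16 x \<or> dvd16 pi16 (x - 1)"
proof -
  obtain n c where c: "c \<in> Z16" "x = of_int n + pi16 * c"
    using Z16_mod_pi16 assms by blast
  obtain d where d: "d \<in> Z16" "of_int (2 * (n div 2)) = pi16 * d"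
    using pi16_dvd16_even unfolding dvd16_def by blast
  have "x - of_int (n mod 2) = pi16 * (d + c)"
    using c d by (simp add: algebra_simps flip: minus_mod_eq_mult_div)
  then have "dvd16 pi16 (x - of_int (n mod 2))"
    using Z16_add c d unfolding dvd16_def by blast
  moreover have "n mod 2 = 0 \<or> n mod 2 = 1"
    by presburger
  ultimately show ?thesis by auto
qed

lemma not_dvd16_pi16_1: "\<not> dvd16 pi16 1"
proof
  assume "dvd16 pi16 1"
  then obtain c where c: "c \<in> Z16" "1 = pi16 * c"
    unfolding dvd16_def by blast
  then have "1 = (pi16 * c) ^ 8" by simp
  then have "2 * (eps16 * c ^ 8) = 1"
    by (simp add: power_mult_distrib pi16_power_8 mult.assoc)
  then have "1 / 2 = eps16 * c ^ 8"
    by (simp add: field_simps)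
  moreover have "eps16 * c ^ 8 \<in> Z16"
    using eps16_Z16 c(1) by (intro Z16_intros)
  ultimately show False
    using half_notin_Z16 by metis
qed

lemma pi16_prime:
  assumes "x \<in> Z16" "y \<in> Z16" "dvd16 pi16 (x * y)"
  shows "dvd16 pi16 x \<or> dvd16 pi16 y"
proof (rule ccontr)
  assume "\<not> ?thesis"
  then have "dvd16 pi16 (x - 1)" "dvd16 pi16 (y - 1)"
    using Z16_residue_0_or_1 assms(1,2) by blast+
  then obtain c d where cd: "c \<in> Z16" "d \<in> Z16" "x = 1 + pi16 * c" "y = 1 + pi16 * d"
    unfolding dvd16_def by (metis diff_add_cancel add.commute)
  obtain e where e: "e \<in> Z16" "x * y = pi16 * e"
    using assms(3) unfolding dvd16_def by blast
  have "1 = pi16 * (e - c - d - pi16 * c * d)"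
    using e(2) unfolding cd(3,4) by (simp add: algebra_simps)
  moreover have "e - c - d - pi16 * c * d \<in> Z16"
    using cd e pi16_Z16 by (intro Z16_intros)
  ultimately show False
    using not_dvd16_pi16_1 unfolding dvd16_def by blast
qed

lemma pi16_nonzero: "pi16 \<noteq> 0"
proof -
  have "s8 > 0"
    unfolding s8_def by (rule sin_gt_zero) simp_all
  then show ?thesis
    by (auto simp: pi16_def zeta16_powers(1) complex_eq_iff)
qed

lemma pi16_dvd16_cnj: "dvd16 pi16 (cnj x) \<Longrightarrow> dvd16 pi16 x"
proof -
  assume "dvd16 pi16 (cnj x)"
  then obtain d where d: "d \<in> Z16" "cnj x = pi16 * d"
    unfolding dvd16_def by blast
  then have "x = pi16 * (zeta16 ^ 7 * cnj d)"
    by (metis cnj_pi16 complex_cnj_cnj complex_cnj_mult mult.assoc)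
  moreover have "zeta16 ^ 7 * cnj d \<in> Z16"
    using d(1) by (intro Z16_intros Z16_cnj)
  ultimately show ?thesis
    unfolding dvd16_def by blast
qed

lemma pi16_power_dvd16_norm:
  assumes "w \<in> Z16" "dvd16 (pi16 ^ (2 * n)) (w * cnj w)"
  shows "dvd16 (pi16 ^ n) w"
  using assms
proof (induction n arbitrary: w)
  case 0
  show ?case using "0.prems"(1) unfolding dvd16_def by auto
next
  case (Suc n)
  obtain c where c: "c \<in> Z16" "w * cnj w = pi16 ^ (2 * Suc n) * c"
    using Suc.prems(2) unfolding dvd16_def by blast
  have "w * cnj w = pi16 * (pi16 ^ (2 * n + 1) * c)"
    using c(2) by simp
  moreover have "pi16 ^ (2 * n + 1) * c \<in> Z16"
    using c(1) pi16_Z16 by (intro Z16_intros)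
  ultimately have "dvd16 pi16 w \<or> dvd16 pi16 (cnj w)"
    using pi16_prime Suc.prems(1) Z16_cnj unfolding dvd16_def by blast
  then obtain w1 where w1: "w1 \<in> Z16" "w = pi16 * w1"
    using pi16_dvd16_cnj unfolding dvd16_def by blast
  have "pi16 * pi16 * (zeta16 ^ 7 * (w1 * cnj w1)) = pi16 * pi16 * (pi16 ^ (2 * n) * c)"
    using c(2) unfolding w1(2) by (simp add: cnj_pi16 algebra_simps)
  then have "zeta16 ^ 7 * (w1 * cnj w1) = pi16 ^ (2 * n) * c"
    using pi16_nonzero by simp
  moreover have "- zeta16 * zeta16 ^ 7 = 1"
    using zeta16_power_8 by (simp flip: power_Suc)
  ultimately have "w1 * cnj w1 = pi16 ^ (2 * n) * (- zeta16 * c)"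
    by (metis mult.assoc mult.left_commute mult_1)
  then have "dvd16 (pi16 ^ (2 * n)) (w1 * cnj w1)"
    using c(1) unfolding dvd16_def by (blast intro: Z16_intros)
  then have "dvd16 (pi16 ^ n) w1"
    using Suc.IH w1(1) by blast
  then show ?case
    using w1(2) unfolding dvd16_def by (auto simp: algebra_simps)
qed

lemma Z16_norm_eq_4_power:
  assumes "w \<in> Z16" "w * cnj w = 4 ^ k"
  shows "w / 2 ^ k \<in> Z16"
proof -
  obtain F where F: "F \<in> Z16" "2 = pi16 ^ 8 * F"
    using two_eq_pi16_power_8 by blast
  have four: "(4::complex) = (pi16 ^ 8 * F) ^ 2"
    by (simp flip: F(2))
  have "w * cnj w = ((pi16 ^ 8 * F) ^ 2) ^ k"
    unfolding assms(2) four ..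
  also have "\<dots> = pi16 ^ (2 * (8 * k)) * F ^ (2 * k)"
    by (simp add: power_mult_distrib flip: power_mult)
  finally have "w * cnj w = pi16 ^ (2 * (8 * k)) * F ^ (2 * k)" .
  then have "dvd16 (pi16 ^ (8 * k)) w"
    using pi16_power_dvd16_norm assms(1) F(1) unfolding dvd16_def by (blast intro: Z16_intros)
  then obtain c where "c \<in> Z16" "w = (pi16 ^ 8) ^ k * c"
    unfolding dvd16_def by (auto simp: power_mult)
  then have "w / 2 ^ k = eps16 ^ k * c" "eps16 ^ k * c \<in> Z16"
    using eps16_Z16 by (simp_all add: pi16_power_8 power_mult_distrib Z16_intros)
  then show ?thesis by simp
qed

lemma R16_subset_dyadic: "R16 \<subseteq> {w / 2 ^ k | w k. w \<in> Z16}"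
  (is "_ \<subseteq> ?S")
proof -
  have "x + y \<in> ?S \<and> x - y \<in> ?S \<and> x * y \<in> ?S" if xy: "x \<in> ?S" "y \<in> ?S" for x y
  proof -
    obtain v k w l where v: "v \<in> Z16" and w: "w \<in> Z16"
      and x: "x = v / 2 ^ k" and y: "y = w / 2 ^ l"
      using xy by blast
    have "x + y = (v * 2 ^ l + w * 2 ^ k) / 2 ^ (k + l)"
      "x - y = (v * 2 ^ l - w * 2 ^ k) / 2 ^ (k + l)" "x * y = (v * w) / 2 ^ (k + l)"
      unfolding x y by (simp_all add: field_simps power_add)
    moreover have "v * 2 ^ l + w * 2 ^ k \<in> Z16" "v * 2 ^ l - w * 2 ^ k \<in> Z16" "v * w \<in> Z16"
      using v w by (auto intro!: Z16_intros)
    ultimately show ?thesis by blast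
  qed
  moreover have "1 / 2 ^ 0 \<in> ?S" "1 / 2 ^ 1 \<in> ?S" "zeta16 / 2 ^ 0 \<in> ?S"
    using Z16.one Z16.zeta by blast+
  ultimately have "is_subring_C ?S" "1 / 2 \<in> ?S" "zeta16 \<in> ?S"
    unfolding is_subring_C_def by simp_all
  then show ?thesis
    unfolding R16_def by (intro Inter_lower) simp
qed

theorem lemma6p2:
  fixes u :: complex
  assumes "u \<in> R16" and "norm u = 1"
  shows "\<exists>l::nat. l \<le> 15 \<and> u = zeta16 ^ l"
proof -
  obtain w k where w: "w \<in> Z16" "u = w / 2 ^ k"
    using R16_subset_dyadic assms(1) by blast
  have "u * cnj u = 1"
    using assms(2) complex_norm_square[of u] by simp
  then have "w * cnj w = 4 ^ k"
    unfolding w(2) by (simp add: field_simps flip: power_mult_distrib)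
  then have "u \<in> Z16"
    using Z16_norm_eq_4_power w by simp
  then show ?thesis
    using Z16_norm_1 assms(2) by blast
qed

end
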